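(* For an integer $n\ge1$ and real $1\le x\le n$, define $\widetilde R_A(n,x)$ by $$A(n,x)=\vartheta(x)\,n+\widetilde R_A(n,x),$$ where $A(n,x)=\sum_{p\le x}\frac{2}{p-1}S_p(n)\log p$ (sum over primes). Then for $n^{2/3}\le x\le n$, $$\widetilde R_A(n,x)=O\!\left(x^{5/4}n^{3/4}(\log n)^{7/2}+n^{5/3}(\log n)^2\right).$$
   Context: $\vartheta(x)=\sum_{p\le x}\log p$ is the first Chebyshev function. For a base $b\ge2$, $d_b(m)$ is the sum of the base-$b$ digits of $m\ge0$ and $S_b(n)=\sum_{j=0}^{n-1}d_b(j)$. *)

theory Defs
  imports "HOL-Analysis.Analysis" "HOL-Computational_Algebra.Primes"
begin

definition cheb_theta :: "real \<Rightarrow> real" where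
  "cheb_theta x = (\<Sum>p\<in>{p::nat. prime p \<and> real p \<le> x}. ln (real p))"

function digit_sum :: "nat \<Rightarrow> nat \<Rightarrow> nat" where
  "digit_sum b m = (if b < 2 \<or> m = 0 then 0 else m mod b + digit_sum b (m div b))"
  by auto
termination
  by (relation "Wellfounded.measure (\<lambda>(b,m). m)") auto

definition S_digits :: "nat \<Rightarrow> nat \<Rightarrow> nat" where
  "S_digits b n = (\<Sum>j<n. digit_sum b j)"

definition A_sum :: "nat \<Rightarrow> real \<Rightarrow> real" where
  "A_sum n x = (\<Sum>p\<in>{p::nat. prime p \<and> real p \<le> x}.
      2 / (real p - 1) * real (S_digits p n) * ln (real p))"

definition R_A :: "nat \<Rightarrow> real \<Rightarrow> real" where
  "R_A n x = A_sum n x - cheb_theta x * real n"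

end

theory Submission
  imports Defs "HOL-Library.Log_Nat"
begin

(*
  Write R_A(n,x) as the sum over primes p <= x of E_p = (2 S_p(n)/(p-1) - n) log p.
  Splitting off the last digit, S_p(n) = sum_{j<n} (j mod p) + sum_{j<n} d_p(j div p).
  The first sum is exactly known and lies between (p-1)(n-p)/2 and (p-1)n/2; the second
  is at most n^2/p since d_p(m) <= m, while S_p(n) itself is at most (p-1)n times the
  number of base-p digits of n. Hence -p log n <= E_p <= 4 n^(3/2) log n / p, using the
  digit count for p <= sqrt n and the last-digit split for p > sqrt n. Summing with
  sum_{p<=x} 1/p <= log x + 1 gives |R_A(n,x)| <= x^2 log n + 4 n^(3/2) log n (log n + 1),
  which is dominated by the claimed bound for all 1 <= x <= n; of the hypothesis
  x >= n^(2/3) only x >= 1 is needed.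
*)

declare digit_sum.simps [simp del]

lemma digit_sum_0 [simp]: "digit_sum b 0 = 0"
  by (simp add: digit_sum.simps)

lemma digit_sum_eq: "2 \<le> b \<Longrightarrow> digit_sum b m = m mod b + digit_sum b (m div b)"
  by (cases "m = 0") (simp_all add: digit_sum.simps[of b m])

lemma digit_sum_le: "digit_sum b m \<le> m"
proof (induction m rule: less_induct)
  case (less m)
  show ?case
  proof (cases "b < 2 \<or> m = 0")
    case True
    then show ?thesis by (auto simp: digit_sum.simps[of b m])
  next
    case False
    then have "digit_sum b (m div b) \<le> m div b"
      by (intro less.IH) simp
    moreover have "m div b \<le> m div b * b"
      using False by simp
    ultimately show ?thesis
      using digit_sum_eq[of b m] div_mult_mod_eq[of m b] False by linarith
  qed
qed

lemma digit_sum_le_digits: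
  assumes "2 \<le> b" "m < b ^ L"
  shows "digit_sum b m \<le> (b - 1) * L"
  using assms(2)
proof (induction L arbitrary: m)
  case (Suc L)
  have "digit_sum b (m div b) \<le> (b - 1) * L"
    using Suc.prems assms(1) by (intro Suc.IH) (simp add: div_less_iff_less_mult mult.commute)
  moreover have "m mod b \<le> b - 1"
    using assms(1) by (simp add: less_Suc_eq_le[symmetric])
  ultimately show ?case
    using digit_sum_eq[OF assms(1), of m] by simp
qed simp

lemma two_sum_mod_eq:
  fixes p n :: nat
  shows "2 * (\<Sum>j<n. j mod p) = n div p * p * (p - 1) + n mod p * (n mod p - 1)"
proof (induction n)
  case (Suc n)
  have step: "2 * (\<Sum>j<Suc n. j mod p)
      = n div p * p * (p - 1) + n mod p * (n mod p - 1) + 2 * (n mod p)"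
    using Suc.IH by simp
  show ?case
  proof (cases "Suc (n mod p) = p")
    case True
    have "n mod p * (n mod p - 1) + 2 * (n mod p) = p * (p - 1)"
      using True by (cases p) (auto simp: algebra_simps)
    then have "2 * (\<Sum>j<Suc n. j mod p) = n div p * p * (p - 1) + p * (p - 1)"
      using step by linarith
    also have "\<dots> = Suc n div p * p * (p - 1) + Suc n mod p * (Suc n mod p - 1)"
      using True by (simp add: mod_Suc div_Suc algebra_simps)
    finally show ?thesis .
  next
    case False
    then have "Suc n mod p = Suc (n mod p)" "Suc n div p = n div p"
      by (simp_all add: mod_Suc div_Suc)
    moreover have "n mod p * (n mod p - 1) + 2 * (n mod p) = Suc (n mod p) * (n mod p)"
      by (cases "n mod p") (simp_all add: algebra_simps)
    ultimately show ?thesis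
      using step by simp
  qed
qed simp

lemma two_sum_mod_bounds:
  fixes p n :: nat
  assumes p: "0 < p"
  shows "(real p - 1) * (real n - real p) \<le> 2 * real (\<Sum>j<n. j mod p)"
    and "2 * real (\<Sum>j<n. j mod p) \<le> (real p - 1) * real n"
proof -
  define q r where "q = n div p" and "r = n mod p"
  have "r < p"
    using p by (simp add: r_def)
  then have r: "real r \<le> real p - 1"
    by linarith
  have "real (2 * (\<Sum>j<n. j mod p)) = real (q * p * (p - 1) + r * (r - 1))"
    using two_sum_mod_eq[of p n] unfolding q_def r_def by (simp only:)
  moreover have "real (r * (r - 1)) = real r * (real r - 1)"
    by (cases r) (simp_all add: algebra_simps)
  ultimately have "2 * real (\<Sum>j<n. j mod p) = real q * real p * (real p - 1) + real r * (real r - 1)"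
    using p by (simp add: of_nat_diff)
  moreover have "real n = real q * real p + real r"
    unfolding q_def r_def by (metis div_mult_mod_eq of_nat_add of_nat_mult)
  ultimately have gap: "(real p - 1) * real n - 2 * real (\<Sum>j<n. j mod p) = real r * (real p - real r)"
    by (simp add: algebra_simps)
  have "real r * (real p - real r) \<le> (real p - 1) * real p"
    using r by (intro mult_mono) auto
  then show "(real p - 1) * (real n - real p) \<le> 2 * real (\<Sum>j<n. j mod p)"
    using gap by (simp add: algebra_simps)
  have "0 \<le> real r * (real p - real r)"
    using r by simp
  then show "2 * real (\<Sum>j<n. j mod p) \<le> (real p - 1) * real n"
    using gap by linarith
qed

lemma S_digits_eq:
  "2 \<le> p \<Longrightarrow> S_digits p n = (\<Sum>j<n. j mod p) + (\<Sum>j<n. digit_sum p (j div p))"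
  unfolding S_digits_def sum.distrib[symmetric] by (intro sum.cong refl digit_sum_eq)

lemma sum_digit_sum_div_le: "real (\<Sum>j<n. digit_sum p (j div p)) \<le> real n ^ 2 / real p"
proof -
  have "(\<Sum>j<n. digit_sum p (j div p)) \<le> (\<Sum>j<n. n div p)"
    by (intro sum_mono order.trans[OF digit_sum_le] div_le_mono) simp
  then have "(\<Sum>j<n. digit_sum p (j div p)) \<le> n * (n div p)"
    by simp
  then have "real (\<Sum>j<n. digit_sum p (j div p)) \<le> real n * real (n div p)"
    by (simp only: of_nat_mult[symmetric] of_nat_le_iff)
  also have "\<dots> \<le> real n * (real n / real p)"
    by (intro mult_left_mono) (simp_all add: of_nat_div_le_of_nat)
  finally show ?thesis
    by (simp add: power2_eq_square)
qed

lemma S_digits_le_floorlog: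
  assumes "2 \<le> p"
  shows "S_digits p n \<le> n * ((p - 1) * floorlog p n)"
proof -
  have "digit_sum p j \<le> (p - 1) * floorlog p n" if "j < n" for j
    using assms that by (intro digit_sum_le_digits floorlog_leD floorlog_mono) auto
  then have "S_digits p n \<le> (\<Sum>j<n. (p - 1) * floorlog p n)"
    unfolding S_digits_def by (intro sum_mono) simp
  then show ?thesis
    by simp
qed

lemma two_S_digits_bounds:
  assumes "2 \<le> p"
  shows "(real p - 1) * (real n - real p) \<le> 2 * real (S_digits p n)"
    and "2 * real (S_digits p n) \<le> (real p - 1) * real n + 2 * (real n ^ 2 / real p)"
proof -
  have p: "0 < p"
    using assms by simp
  have S: "real (S_digits p n) = real (\<Sum>j<n. j mod p) + real (\<Sum>j<n. digit_sum p (j div p))"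
    unfolding S_digits_eq[OF assms] by (rule of_nat_add)
  show "(real p - 1) * (real n - real p) \<le> 2 * real (S_digits p n)"
    using two_sum_mod_bounds(1)[OF p, of n] S of_nat_0_le_iff by linarith
  show "2 * real (S_digits p n) \<le> (real p - 1) * real n + 2 * (real n ^ 2 / real p)"
    using two_sum_mod_bounds(2)[OF p, of n] S sum_digit_sum_div_le[of p n] by linarith
qed

lemma S_digits_ratio_ge:
  assumes "2 \<le> p"
  shows "real n - real p \<le> 2 / (real p - 1) * real (S_digits p n)"
proof -
  have "real p - 1 > 0"
    using assms by simp
  with two_S_digits_bounds(1)[OF assms, of n] show ?thesis
    by (simp add: field_simps)
qed

lemma S_digits_ratio_le_sq:
  assumes "2 \<le> p"
  shows "2 / (real p - 1) * real (S_digits p n) \<le> real n + 4 * (real n / real p) ^ 2"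
proof -
  have p1: "real p - 1 > 0"
    using assms by simp
  have "2 / (real p - 1) * real (S_digits p n)
      \<le> ((real p - 1) * real n + 2 * (real n ^ 2 / real p)) / (real p - 1)"
    using two_S_digits_bounds(2)[OF assms, of n] p1 by (simp add: divide_right_mono)
  also have "\<dots> = real n + (real n / real p) ^ 2 * (2 * real p / (real p - 1))"
    using p1 assms by (simp add: field_simps power2_eq_square)
  also have "\<dots> \<le> real n + (real n / real p) ^ 2 * 4"
    using assms p1 by (intro add_left_mono mult_left_mono) (simp_all add: field_simps)
  finally show ?thesis
    by simp
qed

lemma S_digits_ratio_ln_le:
  assumes "2 \<le> p" "p \<le> n"
  shows "2 / (real p - 1) * real (S_digits p n) * ln (real p) \<le> 4 * real n * ln (real n)"
proof -
  define L where "L = floorlog p n"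
  have "p ^ (L - 1) \<le> n" "L \<noteq> 0"
    using assms floorlog_bounds[of n p] by (auto simp: L_def floorlog_eq_zero_iff)
  then have "ln (real p ^ (L - 1)) \<le> ln (real n)"
    using assms by (subst ln_le_cancel_iff) (simp_all flip: of_nat_power)
  then have "(real L - 1) * ln (real p) \<le> ln (real n)"
    using assms \<open>L \<noteq> 0\<close> by (simp add: ln_realpow of_nat_diff)
  moreover have "ln (real p) \<le> ln (real n)"
    using assms by simp
  ultimately have L: "real L * ln (real p) \<le> 2 * ln (real n)"
    by (simp add: algebra_simps)
  have "real (S_digits p n) \<le> real (n * ((p - 1) * L))"
    unfolding L_def by (intro of_nat_mono S_digits_le_floorlog assms(1))
  also have "\<dots> = real n * ((real p - 1) * real L)"
    using assms(1) by (simp add: of_nat_diff)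
  finally have "real (S_digits p n) \<le> real n * ((real p - 1) * real L)" .
  then have "2 / (real p - 1) * real (S_digits p n) \<le> 2 * real n * real L"
    using assms(1) by (simp add: field_simps)
  then have "2 / (real p - 1) * real (S_digits p n) * ln (real p) \<le> 2 * real n * real L * ln (real p)"
    using assms(1) by (intro mult_right_mono) simp_all
  also have "\<dots> = 2 * real n * (real L * ln (real p))"
    by simp
  also have "\<dots> \<le> 2 * real n * (2 * ln (real n))"
    using L by (intro mult_left_mono) simp_all
  finally show ?thesis
    by simp
qed

definition R_A_term :: "nat \<Rightarrow> nat \<Rightarrow> real" where
  "R_A_term n p = (2 / (real p - 1) * real (S_digits p n) - real n) * ln (real p)"

lemma R_A_eq_sum: "R_A n x = (\<Sum>p\<in>{p. prime p \<and> real p \<le> x}. R_A_term n p)"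
  unfolding R_A_def A_sum_def cheb_theta_def R_A_term_def sum_distrib_right sum_subtractf[symmetric]
  by (intro sum.cong refl) (simp add: algebra_simps)

lemma R_A_term_ge:
  assumes "2 \<le> p" "p \<le> n"
  shows "- (real p * ln (real n)) \<le> R_A_term n p"
proof -
  have "- (real p * ln (real n)) \<le> (- real p) * ln (real p)"
    using assms by simp
  also have "\<dots> \<le> R_A_term n p"
    unfolding R_A_term_def using S_digits_ratio_ge[OF assms(1), of n] assms
    by (intro mult_right_mono) simp_all
  finally show ?thesis .
qed

lemma R_A_term_le:
  assumes "2 \<le> p" "p \<le> n"
  shows "R_A_term n p \<le> 4 * real n * sqrt (real n) * ln (real n) / real p"
proof -
  define U where "U = 2 / (real p - 1) * real (S_digits p n)"
  have p: "2 \<le> real p" "real p \<le> real n"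
    using assms by simp_all
  have ln: "0 < ln (real p)" "ln (real p) \<le> ln (real n)"
    using p by simp_all
  show ?thesis
  proof (cases "real p \<le> sqrt (real n)")
    case True
    have "R_A_term n p \<le> U * ln (real p)"
      unfolding R_A_term_def U_def[symmetric] using ln by (simp add: algebra_simps)
    also have "\<dots> \<le> 4 * real n * ln (real n)"
      unfolding U_def by (rule S_digits_ratio_ln_le[OF assms])
    also have "\<dots> \<le> 4 * real n * sqrt (real n) * ln (real n) / real p"
      using True p ln by (simp add: field_simps mult_left_mono)
    finally show ?thesis .
  next
    case False
    then have "sqrt (real n) * sqrt (real n) < sqrt (real n) * real p"
      using p by (intro mult_strict_left_mono) auto
    then have "real n < sqrt (real n) * real p"
      by simp
    then have np: "real n / real p \<le> sqrt (real n)"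
      using p by (simp add: field_simps)
    have "R_A_term n p \<le> 4 * (real n / real p) ^ 2 * ln (real p)"
      unfolding R_A_term_def using S_digits_ratio_le_sq[OF assms(1), of n] ln
      by (intro mult_right_mono) simp_all
    also have "\<dots> \<le> 4 * (real n / real p) ^ 2 * ln (real n)"
      using ln by (intro mult_left_mono) simp_all
    also have "\<dots> = 4 * (real n / real p) * (real n / real p) * ln (real n)"
      by (simp add: power2_eq_square)
    also have "\<dots> \<le> 4 * (real n / real p) * sqrt (real n) * ln (real n)"
      using np ln p by (intro mult_right_mono mult_left_mono) simp_all
    finally show ?thesis
      by simp
  qed
qed

lemma abs_R_A_term_le:
  assumes "2 \<le> p" "p \<le> n"
  shows "\<bar>R_A_term n p\<bar> \<le> real p * ln (real n) + 4 * real n * sqrt (real n) * ln (real n) / real p"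
proof -
  have "0 \<le> real p * ln (real n)" "0 \<le> 4 * real n * sqrt (real n) * ln (real n) / real p"
    using assms by simp_all
  with R_A_term_ge[OF assms] R_A_term_le[OF assms] show ?thesis
    by linarith
qed

lemma card_primes_le: "0 \<le> x \<Longrightarrow> real (card {p::nat. prime p \<and> real p \<le> x}) \<le> x"
proof -
  have "{p::nat. prime p \<and> real p \<le> x} \<subseteq> {1..nat \<lfloor>x\<rfloor>}"
    using prime_ge_1_nat by (auto simp: le_nat_floor)
  then have "card {p::nat. prime p \<and> real p \<le> x} \<le> nat \<lfloor>x\<rfloor>"
    using card_mono[of "{1..nat \<lfloor>x\<rfloor>}"] by fastforce
  moreover assume "0 \<le> x"
  ultimately show ?thesis
    by linarith
qed

lemma sum_primes_le: "0 \<le> x \<Longrightarrow> (\<Sum>p\<in>{p::nat. prime p \<and> real p \<le> x}. real p) \<le> x ^ 2"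
proof -
  assume x: "0 \<le> x"
  have "(\<Sum>p\<in>{p::nat. prime p \<and> real p \<le> x}. real p) \<le> (\<Sum>p\<in>{p::nat. prime p \<and> real p \<le> x}. x)"
    by (intro sum_mono) simp
  also have "\<dots> \<le> x * x"
    using card_primes_le[OF x] x by (simp add: mult_right_mono)
  finally show ?thesis
    by (simp add: power2_eq_square)
qed

lemma sum_inverse_primes_le:
  assumes "1 \<le> x"
  shows "(\<Sum>p\<in>{p::nat. prime p \<and> real p \<le> x}. 1 / real p) \<le> ln x + 1"
proof -
  define m where "m = nat \<lfloor>x\<rfloor>"
  have m: "1 \<le> m" "real m \<le> x"
    using assms by (simp_all add: m_def le_nat_floor)
  have "{p::nat. prime p \<and> real p \<le> x} \<subseteq> {1..m}"
    using prime_ge_1_nat by (auto simp: m_def le_nat_floor)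
  then have "(\<Sum>p\<in>{p::nat. prime p \<and> real p \<le> x}. 1 / real p) \<le> (\<Sum>k=1..m. 1 / real k)"
    by (intro sum_mono2) auto
  also have "\<dots> = harm m"
    by (simp add: harm_def divide_inverse)
  also have "\<dots> \<le> ln (real m) + 1"
    using euler_mascheroni_sequence_decreasing[of 1 m] m by (simp add: harm_def)
  also have "\<dots> \<le> ln x + 1"
    using m by simp
  finally show ?thesis .
qed

lemma abs_R_A_le:
  assumes "1 \<le> x" "x \<le> real n"
  shows "\<bar>R_A n x\<bar> \<le> x ^ 2 * ln (real n) + 4 * real n * sqrt (real n) * ln (real n) * (ln (real n) + 1)"
proof -
  define P where "P = {p::nat. prime p \<and> real p \<le> x}"
  define K where "K = 4 * real n * sqrt (real n) * ln (real n)"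
  have ln: "0 \<le> ln (real n)" "ln x \<le> ln (real n)"
    using assms by simp_all
  have inv: "(\<Sum>p\<in>P. 1 / real p) \<le> ln (real n) + 1"
    using sum_inverse_primes_le[OF assms(1)] ln(2) unfolding P_def by linarith
  have "\<bar>R_A n x\<bar> \<le> (\<Sum>p\<in>P. \<bar>R_A_term n p\<bar>)"
    unfolding R_A_eq_sum P_def by (rule sum_abs)
  also have "\<dots> \<le> (\<Sum>p\<in>P. real p * ln (real n) + K / real p)"
    using assms(2) unfolding K_def P_def
    by (intro sum_mono abs_R_A_term_le) (auto simp: prime_ge_2_nat)
  also have "\<dots> = (\<Sum>p\<in>P. real p) * ln (real n) + K * (\<Sum>p\<in>P. 1 / real p)"
    by (simp add: sum.distrib sum_distrib_left sum_distrib_right)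
  also have "\<dots> \<le> x ^ 2 * ln (real n) + K * (ln (real n) + 1)"
    using sum_primes_le[of x] inv assms ln
    unfolding K_def P_def by (intro add_mono mult_right_mono mult_left_mono) auto
  finally show ?thesis
    unfolding K_def .
qed

lemma le_powr_seven_halves:
  fixes l :: real
  assumes "2/3 \<le> l"
  shows "l \<le> 4 * l powr (7/2)"
proof -
  have "(2/3) powr 3 \<le> (2/3 :: real) powr (5/2)"
    by (rule powr_mono') simp_all
  also have "\<dots> \<le> l powr (5/2)"
    using assms by (intro powr_mono2) simp_all
  finally have "8/27 \<le> l powr (5/2)"
    by (simp add: power3_eq_cube)
  then have "l * (8/27) \<le> l * l powr (5/2)"
    using assms by (intro mult_left_mono) simp_all
  moreover have "l powr (7/2) = l * l powr (5/2)"
    using assms by (simp add: powr_add[of l 1 "5/2", simplified])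
  ultimately show ?thesis
    using assms by linarith
qed

lemma mult_sqrt_le_powr_five_thirds:
  fixes y :: real
  assumes "1 \<le> y"
  shows "y * sqrt y \<le> y powr (5/3)"
proof -
  have "y * sqrt y = y powr 1 * y powr (1/2)"
    using assms by (simp add: powr_half_sqrt)
  also have "\<dots> = y powr (3/2)"
    unfolding powr_add[symmetric] by simp
  also have "\<dots> \<le> y powr (5/3)"
    using assms by (intro powr_mono) simp_all
  finally show ?thesis .
qed

lemma abs_R_A_le_powr:
  assumes "1 \<le> x" "x \<le> real n"
  shows "\<bar>R_A n x\<bar> \<le> 10 * (x powr (5/4) * real n powr (3/4) * ln (real n) powr (7/2)
                         + real n powr (5/3) * ln (real n) powr 2)"
proof (cases "n = 1")
  case True
  then show ?thesis
    using abs_R_A_le[OF assms] by simp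
next
  case False
  define l where "l = ln (real n)"
  have n: "2 \<le> real n"
    using False assms by simp
  then have l: "2/3 \<le> l"
    unfolding l_def using ln2_ge_two_thirds ln_le_cancel_iff[of 2 "real n"] by linarith
  have "x ^ 2 = x powr (5/4) * x powr (3/4)"
    using assms by (simp flip: powr_add)
  also have "\<dots> \<le> x powr (5/4) * real n powr (3/4)"
    using assms by (intro mult_left_mono powr_mono2) simp_all
  finally have x: "x ^ 2 * l \<le> x powr (5/4) * real n powr (3/4) * (4 * l powr (7/2))"
    using le_powr_seven_halves[OF l] l by (intro mult_mono) simp_all
  have "l * (l + 1) \<le> l * (5/2 * l)"
    using l by (intro mult_left_mono) simp_all
  then have ll: "l * (l + 1) \<le> 5/2 * l powr 2"
    using l by (simp add: power2_eq_square)
  have "4 * (real n * sqrt (real n)) * (l * (l + 1)) \<le> 4 * real n powr (5/3) * (5/2 * l powr 2)"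
    using mult_sqrt_le_powr_five_thirds[of "real n"] n l ll
    by (intro mult_mono[OF mult_left_mono]) simp_all
  then have "4 * real n * sqrt (real n) * l * (l + 1) \<le> 10 * (real n powr (5/3) * l powr 2)"
    by (simp add: algebra_simps)
  moreover have "x ^ 2 * l \<le> 4 * (x powr (5/4) * real n powr (3/4) * l powr (7/2))"
    using x by (simp add: algebra_simps)
  moreover have "0 \<le> x powr (5/4) * real n powr (3/4) * l powr (7/2)"
    by simp
  ultimately show ?thesis
    using abs_R_A_le[OF assms] unfolding l_def distrib_left by linarith
qed

theorem theoremA2:
  "\<exists>C>0. \<forall>n::nat. \<forall>x::real. n \<ge> 1 \<longrightarrow> real n powr (2/3) \<le> x \<longrightarrow> x \<le> real n \<longrightarrow>
     \<bar>R_A n x\<bar> \<le> C * (x powr (5/4) * real n powr (3/4) * ln (real n) powr (7/2)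
                        + real n powr (5/3) * ln (real n) powr 2)"
proof (intro exI[of _ 10] conjI allI impI)
  fix n :: nat and x :: real
  assume "n \<ge> 1" "real n powr (2/3) \<le> x" "x \<le> real n"
  moreover have "1 \<le> real n powr (2/3)"
    using \<open>n \<ge> 1\<close> by (intro ge_one_powr_ge_zero) simp_all
  ultimately show "\<bar>R_A n x\<bar> \<le> 10 * (x powr (5/4) * real n powr (3/4) * ln (real n) powr (7/2)
                        + real n powr (5/3) * ln (real n) powr 2)"
    by (intro abs_R_A_le_powr) simp_all
qed simp

end
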